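(* Let $\mathbb{K}$ be an algebraically closed field of characteristic zero and let $Y=V\times\mathbb{A}^1$ for an irreducible affine variety $V$. Then $Y$ is of type A, i.e. $\mathrm{HD}^*(Y\times\mathbb{A}^1)=\mathbb{K}[Y\times\mathbb{A}^1]$.
   Context: A derivation is locally nilpotent (LND) if every element is killed by some power of it. A slice of an LND $\partial$ is an element $s$ with $\partial(s)=1$. For an affine variety $X$, $\mathrm{HD}^*(X)$ is the $\mathbb{K}$-subalgebra of $\mathbb{K}[X]$ generated by the kernels of all LNDs of $\mathbb{K}[X]$ that have a slice. *)

theory Defs
  imports "HOL-Computational_Algebra.Polynomial"
begin

definition alg_closed_field :: "('k::field) itself \<Rightarrow> bool" where
  "alg_closed_field _ \<longleftrightarrow> (\<forall>p::'k poly. degree p > 0 \<longrightarrow> (\<exists>x. poly p x = 0))"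

definition alg_map :: "('k::field \<Rightarrow> 'r::comm_ring_1) \<Rightarrow> bool" where
  "alg_map e \<longleftrightarrow> e 1 = 1 \<and> (\<forall>a b. e (a + b) = e a + e b) \<and> (\<forall>a b. e (a * b) = e a * e b)"

inductive_set subalg :: "('k \<Rightarrow> 'r::comm_ring_1) \<Rightarrow> 'r set \<Rightarrow> 'r set"
  for e :: "'k \<Rightarrow> 'r" and S :: "'r set" where
  gen: "x \<in> S \<Longrightarrow> x \<in> subalg e S"
| scal: "e c \<in> subalg e S"
| add: "x \<in> subalg e S \<Longrightarrow> y \<in> subalg e S \<Longrightarrow> x + y \<in> subalg e S"
| mult: "x \<in> subalg e S \<Longrightarrow> y \<in> subalg e S \<Longrightarrow> x * y \<in> subalg e S"

definition fin_gen_alg :: "('k \<Rightarrow> 'r::comm_ring_1) \<Rightarrow> bool" where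
  "fin_gen_alg e \<longleftrightarrow> (\<exists>S. finite S \<and> subalg e S = UNIV)"

definition K_derivation :: "('k \<Rightarrow> 'r::comm_ring_1) \<Rightarrow> ('r \<Rightarrow> 'r) \<Rightarrow> bool" where
  "K_derivation e D \<longleftrightarrow>
     (\<forall>a b. D (a + b) = D a + D b) \<and>
     (\<forall>a b. D (a * b) = a * D b + b * D a) \<and>
     (\<forall>c r. D (e c * r) = e c * D r)"

definition LND :: "('k \<Rightarrow> 'r::comm_ring_1) \<Rightarrow> ('r \<Rightarrow> 'r) \<Rightarrow> bool" where
  "LND e D \<longleftrightarrow> K_derivation e D \<and> (\<forall>r. \<exists>n. (D ^^ n) r = 0)"

definition has_slice :: "('r::comm_ring_1 \<Rightarrow> 'r) \<Rightarrow> bool" where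
  "has_slice D \<longleftrightarrow> (\<exists>s. D s = 1)"

definition ker :: "('r::comm_ring_1 \<Rightarrow> 'r) \<Rightarrow> 'r set" where
  "ker D = {r. D r = 0}"

definition HD_star :: "('k \<Rightarrow> 'r::comm_ring_1) \<Rightarrow> 'r set" where
  "HD_star e = subalg e (\<Union> {ker D | D. LND e D \<and> has_slice D})"

end

theory Submission
  imports Defs
begin

text \<open>
  Write \<open>\<bbbK>[Y \<times> \<bbbA>\<^sup>1] = \<bbbK>[V][y][x]\<close>, modelled as \<open>'a poly poly\<close> with \<open>'a = \<bbbK>[V]\<close>, inner
  variable \<open>y\<close> and outer variable \<open>x\<close>. The partial derivatives \<open>\<partial>/\<partial>x\<close> and \<open>\<partial>/\<partial>y\<close> are locally
  nilpotent with slices \<open>x\<close> and \<open>y\<close>; the kernel of the first contains \<open>\<bbbK>[V][y]\<close>, that of the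
  second contains \<open>x\<close>, and together these generate the whole ring.
\<close>

lemma higher_pderiv_eq_0:
  fixes p :: "'a::{comm_semiring_1,semiring_no_zero_divisors} poly"
  assumes "degree p < n"
  shows "(pderiv ^^ n) p = 0"
  using assms by (intro poly_eqI) (simp add: coeff_higher_pderiv coeff_eq_0)

lemma LND_pderiv: "LND (\<lambda>c. [:f c:]) (pderiv :: 'r::idom poly \<Rightarrow> 'r poly)"
  unfolding LND_def K_derivation_def
proof (intro conjI allI)
  fix p q :: "'r poly" and c
  show "pderiv (p + q) = pderiv p + pderiv q" by (rule pderiv_add)
  show "pderiv (p * q) = p * pderiv q + q * pderiv p" by (rule pderiv_mult)
  show "pderiv ([:f c:] * p) = [:f c:] * pderiv p" by (simp add: pderiv_smult)
  show "\<exists>n. (pderiv ^^ n) p = 0" using higher_pderiv_eq_0[of p "Suc (degree p)"] by blast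
qed

definition inner_pderiv :: "'a::idom poly poly \<Rightarrow> 'a poly poly" where
  "inner_pderiv p = map_poly pderiv p"

lemma coeff_inner_pderiv: "coeff (inner_pderiv p) n = pderiv (coeff p n)"
  unfolding inner_pderiv_def by (simp add: coeff_map_poly)

lemma inner_pderiv_add: "inner_pderiv (p + q) = inner_pderiv p + inner_pderiv q"
  by (intro poly_eqI) (simp add: coeff_inner_pderiv pderiv_add)

lemma inner_pderiv_mult: "inner_pderiv (p * q) = p * inner_pderiv q + q * inner_pderiv p"
proof (rule poly_eqI)
  fix n
  have pderiv_sum: "pderiv (sum f A) = (\<Sum>x\<in>A. pderiv (f x))" for f and A :: "nat set"
    using higher_pderiv_sum[of 1] by simp
  have "coeff (inner_pderiv (p * q)) n
      = (\<Sum>i\<le>n. coeff p i * pderiv (coeff q (n - i)) + coeff q (n - i) * pderiv (coeff p i))"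
    by (simp add: coeff_inner_pderiv coeff_mult pderiv_sum pderiv_mult)
  also have "\<dots> = (\<Sum>i\<le>n. coeff p i * pderiv (coeff q (n - i)))
      + (\<Sum>i\<le>n. coeff q i * pderiv (coeff p (n - i)))"
    by (simp add: sum.distrib) (rule sum.reindex_bij_witness[of _ "\<lambda>i. n - i" "\<lambda>i. n - i"]; auto)
  also have "\<dots> = coeff (p * inner_pderiv q + q * inner_pderiv p) n"
    by (simp add: coeff_mult coeff_inner_pderiv)
  finally show "coeff (inner_pderiv (p * q)) n = coeff (p * inner_pderiv q + q * inner_pderiv p) n" .
qed

lemma higher_inner_pderiv: "(inner_pderiv ^^ n) p = map_poly (pderiv ^^ n) p"
proof (induction n arbitrary: p)
  case 0
  then show ?case by (simp add: map_poly_idI)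
next
  case (Suc n)
  then show ?case
    by (intro poly_eqI) (simp add: coeff_inner_pderiv coeff_map_poly del: funpow.simps add: funpow_Suc_right)
qed

lemma LND_inner_pderiv: "LND (\<lambda>c. [:[:f c:]:]) (inner_pderiv :: 'r::idom poly poly \<Rightarrow> _)"
  unfolding LND_def K_derivation_def
proof (intro conjI allI)
  fix p q :: "'r poly poly" and c
  show "inner_pderiv (p + q) = inner_pderiv p + inner_pderiv q" by (rule inner_pderiv_add)
  show "inner_pderiv (p * q) = p * inner_pderiv q + q * inner_pderiv p" by (rule inner_pderiv_mult)
  have "inner_pderiv [:[:f c:]:] = 0"
    by (intro poly_eqI) (simp add: coeff_inner_pderiv coeff_pCons split: nat.split)
  then show "inner_pderiv ([:[:f c:]:] * p) = [:[:f c:]:] * inner_pderiv p"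
    unfolding inner_pderiv_mult by simp
  define N where "N = Max (degree ` coeff p ` {..degree p})"
  have "degree (coeff p i) \<le> N" for i
  proof (cases "i \<le> degree p")
    case True
    then show ?thesis unfolding N_def by (intro Max_ge) auto
  qed (simp add: coeff_eq_0)
  then have "(pderiv ^^ Suc N) (coeff p i) = 0" for i
    by (intro higher_pderiv_eq_0) (simp add: le_imp_less_Suc)
  then have "(inner_pderiv ^^ Suc N) p = 0"
    by (intro poly_eqI) (simp add: higher_inner_pderiv coeff_map_poly del: funpow.simps)
  then show "\<exists>n. (inner_pderiv ^^ n) p = 0" by blast
qed

lemma subalg_poly_eq_UNIV:
  fixes S :: "'r::comm_ring_1 poly set"
  assumes "\<And>a. [:a:] \<in> S" and "[:0, 1:] \<in> S"
  shows "subalg e S = UNIV"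
proof -
  have "p \<in> subalg e S" for p
  proof (induction p)
    case 0
    show ?case using subalg.gen[OF assms(1)[of 0]] by simp
  next
    case (pCons a p)
    have "[:a:] + [:0, 1:] * p \<in> subalg e S"
      by (intro subalg.add subalg.mult subalg.gen assms pCons.IH)
    then show ?case by simp
  qed
  then show ?thesis by blast
qed

theorem corollary4:
  fixes e :: "'k::field_char_0 \<Rightarrow> 'a::idom"
  assumes "alg_closed_field TYPE('k)"
    and "alg_map e"
    and "fin_gen_alg e"
  shows "HD_star (\<lambda>c. [:[:e c:]:]) = (UNIV :: 'a poly poly set)"
proof -
  let ?G = "\<Union> {ker D | D. LND (\<lambda>c. [:[:e c:]:]) D \<and> has_slice D}"
  have "[:a:] \<in> ?G" for a
  proof -
    have "has_slice (pderiv :: 'a poly poly \<Rightarrow> _)"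
      unfolding has_slice_def by (rule exI[of _ "[:0, 1:]"]) (simp add: pderiv_pCons)
    moreover have "[:a:] \<in> ker pderiv"
      unfolding ker_def by simp
    ultimately show ?thesis
      using LND_pderiv[of "\<lambda>c. [:e c:]"] by blast
  qed
  moreover have "[:0, 1:] \<in> ?G"
  proof -
    have "has_slice (inner_pderiv :: 'a poly poly \<Rightarrow> _)"
      unfolding has_slice_def
      by (rule exI[of _ "[:[:0, 1:]:]"])
        (simp add: poly_eq_iff coeff_inner_pderiv coeff_pCons pderiv_pCons split: nat.split)
    moreover have "[:0, 1:] \<in> ker inner_pderiv"
      unfolding ker_def by (simp add: poly_eq_iff coeff_inner_pderiv coeff_pCons split: nat.split)
    ultimately show ?thesis
      using LND_inner_pderiv[of e] by blast
  qed
  ultimately show ?thesis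
    unfolding HD_star_def by (rule subalg_poly_eq_UNIV)
qed

end
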